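(* For $n\ge2$ let $m=(n-1)^2$ and let $\Gamma_n$ be the $m\times m$ matrix indexed by $(i,j)\in\{1,\dots,n-1\}^2$ with $$(\Gamma_n)_{(i,j),(i',j')}=\begin{cases}1&(i,j)=(i',j'),\\-\frac1{n-1}& i=i'\text{ or }j=j'\text{ but not both},\\\frac1{(n-1)^2}& i\ne i'\text{ and }j\ne j'.\end{cases}$$ Order the indices row-major ($(1,1),(1,2),\dots,(1,n-1),(2,1),\dots$) and let $\Psi_n=\Gamma_n^{-1}$. Then $\sup_n\|\Psi_n\|_{\max}\le4$, and, with $a^{(n)}_1,\dots,a^{(n)}_m$ the inverse Schur complements of $\Psi_n$ defined in the context, for every $\alpha\ge1$ and every $n\ge2$, $$\sum_{k=1}^{m}(\alpha m)^{-a^{(n)}_k}\ \le\ g(\alpha):=\frac{1+2e^{4/e}+2e^{8/e}+e^{32/e}}{\alpha^{1/4}}.$$ In particular the sequence $(\Gamma_n)$ satisfies the Correlation Condition (in dimension $m=(n-1)^2$) with bounding function $g$.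
   Context: $\|M\|_{\max}=\max_{a,b}|M_{ab}|$. For an invertible $m\times m$ matrix with inverse $\Psi$, let $\Psi_{k}$ be the principal submatrix of the first $k$ rows and columns (in the given index order), partitioned as $\begin{bmatrix}\Psi^{(11)}_{k}&\Psi^{(12)}_{k}\\\Psi^{(21)}_{k}&\Psi^{(22)}_{k}\end{bmatrix}$ with $\Psi^{(11)}_{k}$ the leading $(k-1)\times(k-1)$ block and $\Psi^{(22)}_{k}$ the $(k,k)$ entry; set $a_1=\Psi_{11}^{-1}$ and $a_k=\big(\Psi^{(22)}_{k}-\Psi^{(21)}_{k}(\Psi^{(11)}_{k})^{-1}\Psi^{(12)}_{k}\big)^{-1}$ for $k\ge2$. The Correlation Condition for a sequence of invertible $m\times m$ correlation matrices requires $\sup\|\Psi\|_{\max}<\infty$ and $\sup\sum_{k=1}^m(\alpha m)^{-a_k}\le g(\alpha)$ for all $\alpha\ge1$, with $g$ decreasing, independent of the index of the sequence, and $g(\alpha)\to0$ as $\alpha\to\infty$. ($\Gamma_n$ is the correlation matrix of one increment of the $n\times n$ Diaconis–Gangolli walk restricted to the first $n-1$ rows and columns.) *)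

theory Defs
  imports "HOL-Analysis.Analysis" "Jordan_Normal_Form.Matrix"
begin

text \<open>Matrices are Jordan_Normal_Form matrices with 0-based indices.
  Index p in {0..<(n-1)^2} corresponds (row-major) to the pair
  (i,j) = (p div (n-1) + 1, p mod (n-1) + 1).\<close>

definition Gamma :: "nat \<Rightarrow> real mat" where
  "Gamma n = (let d = n - 1 in
     mat (d^2) (d^2) (\<lambda>(p, q).
       let i = p div d; j = p mod d; i' = q div d; j' = q mod d in
       if i = i' \<and> j = j' then 1
       else if i = i' \<or> j = j' then - 1 / real d
       else 1 / (real d)^2))"

definition minv :: "real mat \<Rightarrow> real mat" where
  "minv A = (THE B. B \<in> carrier_mat (dim_row A) (dim_row A) \<and>
                    A * B = 1\<^sub>m (dim_row A) \<and> B * A = 1\<^sub>m (dim_row A))"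

definition max_norm :: "real mat \<Rightarrow> real" where
  "max_norm A = Max {\<bar>A $$ (a, b)\<bar> | a b. a < dim_row A \<and> b < dim_col A}"

definition lead_sub :: "real mat \<Rightarrow> nat \<Rightarrow> real mat" where
  "lead_sub A k = mat k k (\<lambda>(a, b). A $$ (a, b))"

text \<open>Inverse Schur complements a_k (k = 1..m) of Psi, as in the paper:
  a_1 = 1/Psi_11, and for k >= 2,
  a_k = (Psi22_k - Psi21_k (Psi11_k)^(-1) Psi12_k)^(-1), with the blocks of the
  leading k x k submatrix (the product written out as a double sum).\<close>
definition inv_schur :: "real mat \<Rightarrow> nat \<Rightarrow> real" where
  "inv_schur Psi k =
     (if k = 1 then 1 / Psi $$ (0, 0)
      else (let B = minv (lead_sub Psi (k - 1)) in
        1 / (Psi $$ (k - 1, k - 1)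
             - (\<Sum>a<k - 1. \<Sum>b<k - 1. Psi $$ (k - 1, a) * B $$ (a, b) * Psi $$ (b, k - 1)))))"

definition g_bound :: "real \<Rightarrow> real" where
  "g_bound \<alpha> = (1 + 2 * exp (4 / exp 1) + 2 * exp (8 / exp 1) + exp (32 / exp 1)) / \<alpha> powr (1/4)"

end

theory Submission
  imports Defs "Jordan_Normal_Form.Determinant"
begin

text \<open>With \<open>d = n - 1\<close> and \<open>J\<close> the all-ones \<open>d \<times> d\<close> matrix, \<open>\<Gamma>\<^sub>n\<close> is the Kronecker square of
  \<open>G = (1 + 1/d) I - J/d\<close>, whose inverse is \<open>H = d/(d+1) (I + J)\<close>; so \<open>\<Psi>\<^sub>n = H \<otimes> H\<close>, whose
  entries are at most \<open>4\<close>. Its quadratic form dominates \<open>(d/(d+1))\<^sup>2 |x|\<^sup>2\<close>, so all leading principal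
  submatrices are invertible. For the row-major position \<open>K = (I, J)\<close>, the Kronecker product of the
  staircase vectors \<open>e\<^sub>I - (e\<^sub>0 + \<dots> + e\<^sub>I\<^sub>-\<^sub>1)/(I+1)\<close> and \<open>e\<^sub>J - (e\<^sub>0 + \<dots> + e\<^sub>J\<^sub>-\<^sub>1)/(J+1)\<close> is
  supported on the first \<open>K + 1\<close> coordinates and is mapped by \<open>\<Psi>\<^sub>n\<close> to a vector vanishing on the
  first \<open>K\<close>; this identifies the inverse Schur complement as \<open>b\<^sub>I b\<^sub>J\<close> with
  \<open>b\<^sub>I = (d+1)(I+1)/(d(I+2)) \<in> [1/2, 1]\<close>. Then \<open>(\<alpha> d\<^sup>2) powr (-b\<^sub>I b\<^sub>J) \<le> \<alpha> powr (-1/4) \<cdot> d powr (1-2b\<^sub>I) \<cdot> d powr (1-2b\<^sub>J)\<close>,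
  and \<open>\<Sum>\<^sub>I d powr (1-2b\<^sub>I) \<le> e + 12\<close> by comparing each term with \<open>e/d + 12/((I+1)(I+2))\<close>.\<close>

lemma sum_lessThan_add:
  fixes f :: "nat \<Rightarrow> 'a::comm_monoid_add"
  shows "(\<Sum>p<a+b. f p) = (\<Sum>p<a. f p) + (\<Sum>j<b. f (a+j))"
  by (induction b) (simp_all add: add.assoc)

lemma sum_lessThan_mult_row_major:
  fixes f :: "nat \<Rightarrow> 'a::comm_monoid_add"
  shows "(\<Sum>p<e*d. f p) = (\<Sum>i<e. \<Sum>j<d. f (d*i+j))"
proof (induction e)
  case (Suc e)
  have "(\<Sum>p<Suc e * d. f p) = (\<Sum>p<e*d + d. f p)" by (simp add: add.commute)
  also have "\<dots> = (\<Sum>p<e*d. f p) + (\<Sum>j<d. f (d*e+j))"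
    by (simp add: sum_lessThan_add mult.commute)
  finally show ?case using Suc by simp
qed simp

lemma sum_lessThan_mult_div_mod:
  fixes f g :: "nat \<Rightarrow> 'a::comm_semiring_0"
  shows "(\<Sum>p<e*d. f (p div d) * g (p mod d)) = (\<Sum>i<e. f i) * (\<Sum>j<d. g j)"
  by (simp add: sum_lessThan_mult_row_major sum_product)

lemma div_mod_less_mult:
  fixes p :: nat
  assumes "p < m * n"
  shows "p div n < m" "p mod n < n"
proof -
  show "p div n < m" using assms by (simp add: less_mult_imp_div_less)
  have "n > 0" using assms by (cases n) auto
  then show "p mod n < n" by simp
qed

lemma index_mult_mat_sum:
  "i < dim_row A \<Longrightarrow> j < dim_col B \<Longrightarrow> dim_col A = dim_row B \<Longrightarrow>
   (A * B) $$ (i, j) = (\<Sum>k<dim_col A. A $$ (i, k) * B $$ (k, j))"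
  by (simp add: scalar_prod_def atLeast0LessThan)

definition kron_mat :: "'a::times mat \<Rightarrow> 'a mat \<Rightarrow> 'a mat" where
  "kron_mat A B = mat (dim_row A * dim_row B) (dim_col A * dim_col B)
     (\<lambda>(p, q). A $$ (p div dim_row B, q div dim_col B) * B $$ (p mod dim_row B, q mod dim_col B))"

lemma dim_kron_mat [simp]:
  "dim_row (kron_mat A B) = dim_row A * dim_row B"
  "dim_col (kron_mat A B) = dim_col A * dim_col B"
  by (simp_all add: kron_mat_def)

lemma index_kron_mat [simp]:
  "p < dim_row A * dim_row B \<Longrightarrow> q < dim_col A * dim_col B \<Longrightarrow>
   kron_mat A B $$ (p, q) = A $$ (p div dim_row B, q div dim_col B) * B $$ (p mod dim_row B, q mod dim_col B)"
  by (simp add: kron_mat_def)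

lemma kron_mat_carrier:
  assumes "A \<in> carrier_mat m n" "B \<in> carrier_mat m' n'"
  shows "kron_mat A B \<in> carrier_mat (m * m') (n * n')"
  using assms by (intro carrier_matI) auto

lemma kron_mat_mult:
  fixes A C B D :: "'a::comm_semiring_0 mat"
  assumes A: "A \<in> carrier_mat m n" and C: "C \<in> carrier_mat n k"
    and B: "B \<in> carrier_mat m' n'" and D: "D \<in> carrier_mat n' k'"
  shows "kron_mat A B * kron_mat C D = kron_mat (A * C) (B * D)"
proof (rule eq_matI)
  fix p q assume "p < dim_row (kron_mat (A * C) (B * D))" "q < dim_col (kron_mat (A * C) (B * D))"
  then have p: "p < m * m'" and q: "q < k * k'" using A B C D by auto
  have "(kron_mat A B * kron_mat C D) $$ (p, q)
      = (\<Sum>r<n*n'. kron_mat A B $$ (p, r) * kron_mat C D $$ (r, q))"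
    using p q A B C D by (subst index_mult_mat_sum) auto
  also have "\<dots> = (\<Sum>r<n*n'. (A $$ (p div m', r div n') * C $$ (r div n', q div k'))
                  * (B $$ (p mod m', r mod n') * D $$ (r mod n', q mod k')))"
    using p q A B C D by (intro sum.cong) (auto simp: algebra_simps)
  also have "\<dots> = (\<Sum>i<n. A $$ (p div m', i) * C $$ (i, q div k'))
                  * (\<Sum>j<n'. B $$ (p mod m', j) * D $$ (j, q mod k'))"
    by (rule sum_lessThan_mult_div_mod)
  also have "\<dots> = (A * C) $$ (p div m', q div k') * (B * D) $$ (p mod m', q mod k')"
    using div_mod_less_mult[OF p] div_mod_less_mult[OF q] A B C D
    by (subst (1 2) index_mult_mat_sum) auto
  finally show "(kron_mat A B * kron_mat C D) $$ (p, q) = kron_mat (A * C) (B * D) $$ (p, q)"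
    using p q A B C D by simp
qed (use A B C D in auto)

lemma kron_mat_one: "kron_mat (1\<^sub>m m) (1\<^sub>m n) = (1\<^sub>m (m*n) :: 'a::semiring_1 mat)"
proof (rule eq_matI)
  fix p q assume "p < dim_row (1\<^sub>m (m*n) :: 'a mat)" "q < dim_col (1\<^sub>m (m*n) :: 'a mat)"
  then have pq: "p < m*n" "q < m*n" by auto
  have "(p div n = q div n \<and> p mod n = q mod n) \<longleftrightarrow> p = q"
    by (metis div_mult_mod_eq)
  then show "kron_mat (1\<^sub>m m) (1\<^sub>m n) $$ (p, q) = (1\<^sub>m (m*n) :: 'a mat) $$ (p, q)"
    using pq div_mod_less_mult[OF pq(1)] div_mod_less_mult[OF pq(2)] by auto
qed auto

lemma minv_eqI:
  assumes A: "A \<in> carrier_mat n n" and B: "B \<in> carrier_mat n n"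
    and AB: "A * B = 1\<^sub>m n" and BA: "B * A = 1\<^sub>m n"
  shows "minv A = B"
  unfolding minv_def
proof (rule the_equality)
  fix C assume "C \<in> carrier_mat (dim_row A) (dim_row A) \<and> A * C = 1\<^sub>m (dim_row A) \<and> C * A = 1\<^sub>m (dim_row A)"
  then have C: "C \<in> carrier_mat n n" "C * A = 1\<^sub>m n" using A by auto
  have "C = C * (A * B)" using C(1) by (simp add: AB)
  also have "\<dots> = (C * A) * B" using A B C(1) by (simp add: assoc_mult_mat)
  finally show "C = B" using B C(2) by simp
qed (use A B AB BA in simp)

lemma max_norm_le:
  assumes "0 < dim_row A" "0 < dim_col A"
    and bound: "\<And>a b. a < dim_row A \<Longrightarrow> b < dim_col A \<Longrightarrow> \<bar>A $$ (a, b)\<bar> \<le> c"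
  shows "max_norm A \<le> c"
proof -
  let ?S = "{\<bar>A $$ (a, b)\<bar> | a b. a < dim_row A \<and> b < dim_col A}"
  have "?S = (\<lambda>(a, b). \<bar>A $$ (a, b)\<bar>) ` ({..<dim_row A} \<times> {..<dim_col A})" by auto
  then have "finite ?S" by simp
  moreover have "?S \<noteq> {}" using assms(1,2) by blast
  ultimately show ?thesis unfolding max_norm_def using bound by (auto simp: Max_le_iff)
qed

definition gamma_factor :: "nat \<Rightarrow> real mat" where
  "gamma_factor d = mat d d (\<lambda>(x, y). if x = y then 1 else - 1 / real d)"

definition psi_factor :: "nat \<Rightarrow> real mat" where
  "psi_factor d = mat d d (\<lambda>(x, y). real d / (real d + 1) * (if x = y then 2 else 1))"

definition Psi :: "nat \<Rightarrow> real mat" where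
  "Psi d = kron_mat (psi_factor d) (psi_factor d)"

lemma dim_gamma_factor [simp]: "dim_row (gamma_factor d) = d" "dim_col (gamma_factor d) = d"
  and dim_psi_factor [simp]: "dim_row (psi_factor d) = d" "dim_col (psi_factor d) = d"
  by (simp_all add: gamma_factor_def psi_factor_def)

lemma gamma_factor_carrier: "gamma_factor d \<in> carrier_mat d d"
  and psi_factor_carrier: "psi_factor d \<in> carrier_mat d d"
  by (simp_all add: carrier_matI)

lemma Psi_carrier: "Psi d \<in> carrier_mat (d^2) (d^2)"
  unfolding Psi_def power2_eq_square by (intro kron_mat_carrier psi_factor_carrier)

lemma Gamma_eq_kron_mat: "Gamma n = kron_mat (gamma_factor (n - 1)) (gamma_factor (n - 1))"
proof (rule eq_matI)
  let ?d = "n - 1"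
  fix p q assume "p < dim_row (kron_mat (gamma_factor ?d) (gamma_factor ?d))"
    "q < dim_col (kron_mat (gamma_factor ?d) (gamma_factor ?d))"
  then have pq: "p < ?d * ?d" "q < ?d * ?d" using gamma_factor_carrier by auto
  have "Gamma n $$ (p, q) = (if p div ?d = q div ?d then 1 else - 1 / real ?d)
                          * (if p mod ?d = q mod ?d then 1 else - 1 / real ?d)"
    using pq unfolding Gamma_def Let_def by (auto simp: power2_eq_square)
  then show "Gamma n $$ (p, q) = kron_mat (gamma_factor ?d) (gamma_factor ?d) $$ (p, q)"
    using pq div_mod_less_mult[OF pq(1)] div_mod_less_mult[OF pq(2)] gamma_factor_carrier
    by (simp add: gamma_factor_def)
qed (simp_all add: Gamma_def gamma_factor_def Let_def power2_eq_square)

lemma gamma_factor_mult_psi_factor: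
  assumes "d > 0"
  shows "gamma_factor d * psi_factor d = 1\<^sub>m d"
proof (rule eq_matI)
  fix u v assume "u < dim_row (1\<^sub>m d :: real mat)" "v < dim_col (1\<^sub>m d :: real mat)"
  then have uv: "u < d" "v < d" by simp_all
  define c where "c = real d / (real d + 1)"
  define h where "h = (if u = v then 2 else 1 :: real)"
  have pointwise: "(if u = x then 1 else - 1 / real d) * (if x = v then 2 else 1)
      = (if x = u then (1 + 1 / real d) * h else 0) - 1 / real d - (if x = v then 1 / real d else 0)"
    for x
    using assms by (auto simp: h_def field_simps)
  have "(gamma_factor d * psi_factor d) $$ (u, v)
      = (\<Sum>x<d. (if u = x then 1 else - 1 / real d) * (c * (if x = v then 2 else 1)))"
    using uv by (subst index_mult_mat_sum) (simp_all add: gamma_factor_def psi_factor_def c_def)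
  also have "\<dots> = c * ((1 + 1 / real d) * h - 1 - 1 / real d)"
    using uv assms
    by (simp add: mult.left_commute[of _ c] sum_distrib_left[symmetric] pointwise sum_subtractf)
  also have "\<dots> = c * (1 + 1 / real d) * (h - 1)" using assms by (simp add: field_simps)
  also have "c * (1 + 1 / real d) = 1"
    using assms by (simp add: c_def field_simps) (metis add_pos_pos of_nat_0_less_iff mult_pos_pos less_irrefl)
  also have "1 * (h - 1) = 1\<^sub>m d $$ (u, v)" using uv by (simp add: h_def)
  finally show "(gamma_factor d * psi_factor d) $$ (u, v) = 1\<^sub>m d $$ (u, v)" .
qed (simp_all add: gamma_factor_def psi_factor_def)

lemma psi_factor_mult_gamma_factor:
  assumes "d > 0"
  shows "psi_factor d * gamma_factor d = 1\<^sub>m d"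
proof -
  have "transpose_mat (gamma_factor d) = gamma_factor d" "transpose_mat (psi_factor d) = psi_factor d"
    by (auto simp: gamma_factor_def psi_factor_def)
  then have "psi_factor d * gamma_factor d = transpose_mat (gamma_factor d * psi_factor d)"
    by (simp add: transpose_mult[OF gamma_factor_carrier psi_factor_carrier])
  then show ?thesis using assms by (simp add: gamma_factor_mult_psi_factor)
qed

lemma Gamma_inverse:
  assumes "n \<ge> 2"
  shows "invertible_mat (Gamma n)" "minv (Gamma n) = Psi (n - 1)"
proof -
  define d where "d = n - 1"
  have d: "d > 0" using assms by (simp add: d_def)
  have Gamma: "Gamma n = kron_mat (gamma_factor d) (gamma_factor d)"
    unfolding d_def by (rule Gamma_eq_kron_mat)
  have G: "Gamma n \<in> carrier_mat (d^2) (d^2)"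
    unfolding Gamma power2_eq_square by (intro kron_mat_carrier gamma_factor_carrier)
  have GP: "Gamma n * Psi d = 1\<^sub>m (d^2)"
    unfolding Gamma Psi_def power2_eq_square
    by (simp add: kron_mat_mult[OF gamma_factor_carrier psi_factor_carrier
                                   gamma_factor_carrier psi_factor_carrier]
                  gamma_factor_mult_psi_factor[OF d] kron_mat_one)
  have PG: "Psi d * Gamma n = 1\<^sub>m (d^2)"
    unfolding Gamma Psi_def power2_eq_square
    by (simp add: kron_mat_mult[OF psi_factor_carrier gamma_factor_carrier
                                   psi_factor_carrier gamma_factor_carrier]
                  psi_factor_mult_gamma_factor[OF d] kron_mat_one)
  show "minv (Gamma n) = Psi (n - 1)"
    unfolding d_def[symmetric] by (rule minv_eqI[OF G Psi_carrier GP PG])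
  show "invertible_mat (Gamma n)"
    unfolding invertible_mat_def inverts_mat_def using G Psi_carrier[of d] GP PG by auto
qed

lemma index_Psi:
  assumes "p < d^2" "q < d^2"
  shows "Psi d $$ (p, q) = (real d / (real d + 1))^2
     * (if p div d = q div d then 2 else 1) * (if p mod d = q mod d then 2 else 1)"
  using assms div_mod_less_mult[of p d d] div_mod_less_mult[of q d d]
  by (simp add: Psi_def psi_factor_def power2_eq_square)

lemma max_norm_Psi_le:
  assumes "d > 0"
  shows "max_norm (Psi d) \<le> 4"
proof (rule max_norm_le)
  fix p q assume "p < dim_row (Psi d)" "q < dim_col (Psi d)"
  then have pq: "p < d^2" "q < d^2" using Psi_carrier[of d] by auto
  have "(real d / (real d + 1))^2 \<le> 1" by (simp add: power_le_one)
  then show "\<bar>Psi d $$ (p, q)\<bar> \<le> 4"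
    unfolding index_Psi[OF pq] by (auto simp: abs_mult)
qed (use assms Psi_carrier[of d] in auto)

lemma double_sum_same_fibre_nonneg:
  fixes x :: "'a \<Rightarrow> real" and f :: "'a \<Rightarrow> 'b"
  assumes "finite S"
  shows "(\<Sum>p\<in>S. \<Sum>q\<in>S. x p * x q * (if f p = f q then 1 else 0)) \<ge> 0"
proof -
  define F where "F y = (\<Sum>q\<in>{q\<in>S. f q = y}. x q)" for y
  have "(\<Sum>p\<in>S. \<Sum>q\<in>S. x p * x q * (if f p = f q then 1 else 0)) = (\<Sum>p\<in>S. x p * F (f p))"
  proof (intro sum.cong refl)
    fix p assume "p \<in> S"
    have "(\<Sum>q\<in>S. x p * x q * (if f p = f q then 1 else 0)) = x p * (\<Sum>q\<in>S. if f q = f p then x q else 0)"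
      unfolding sum_distrib_left by (intro sum.cong refl) auto
    also have "\<dots> = x p * F (f p)" unfolding F_def using assms by (simp add: sum.inter_filter)
    finally show "(\<Sum>q\<in>S. x p * x q * (if f p = f q then 1 else 0)) = x p * F (f p)" .
  qed
  also have "\<dots> = (\<Sum>y\<in>f ` S. \<Sum>p\<in>{p\<in>S. f p = y}. x p * F (f p))"
    using assms by (rule sum.image_gen)
  also have "\<dots> = (\<Sum>y\<in>f ` S. F y * F y)"
    by (intro sum.cong refl) (simp add: F_def sum_distrib_right)
  also have "\<dots> \<ge> 0" by (intro sum_nonneg) simp
  finally show ?thesis .
qed

text \<open>\<open>Psi d\<close> is \<open>(d/(d+1))\<^sup>2 (J \<otimes> J + J \<otimes> I + I \<otimes> J + I \<otimes> I)\<close>, and each of the first three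
  summands is positive semidefinite.\<close>

lemma Psi_quadratic_form_ge:
  fixes x :: "nat \<Rightarrow> real" and d :: nat
  defines "S \<equiv> {..<d^2}"
  shows "(\<Sum>p\<in>S. \<Sum>q\<in>S. x p * x q * Psi d $$ (p, q)) \<ge> (real d / (real d + 1))^2 * (\<Sum>p\<in>S. (x p)^2)"
proof -
  let ?c = "(real d / (real d + 1))^2"
  let ?eq = "\<lambda>a b. if a = b then 1 else 0 :: real"
  have entry: "x p * x q * Psi d $$ (p, q) = ?c * (x p * x q + x p * x q * ?eq (p div d) (q div d)
      + x p * x q * ?eq (p mod d) (q mod d) + x p * x q * ?eq p q)"
    if "p \<in> S" "q \<in> S" for p q
  proof -
    have "(p div d = q div d \<and> p mod d = q mod d) = (p = q)" by (metis div_mult_mod_eq)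
    then show ?thesis using that by (auto simp: S_def index_Psi algebra_simps)
  qed
  have "(\<Sum>p\<in>S. \<Sum>q\<in>S. x p * x q * Psi d $$ (p, q)) = ?c * (
      (\<Sum>p\<in>S. \<Sum>q\<in>S. x p * x q * ?eq () ())
    + (\<Sum>p\<in>S. \<Sum>q\<in>S. x p * x q * ?eq (p div d) (q div d))
    + (\<Sum>p\<in>S. \<Sum>q\<in>S. x p * x q * ?eq (p mod d) (q mod d))
    + (\<Sum>p\<in>S. \<Sum>q\<in>S. x p * x q * ?eq p q))"
    by (simp add: entry sum_distrib_left[symmetric] sum.distrib)
  also have "(\<Sum>p\<in>S. \<Sum>q\<in>S. x p * x q * ?eq p q) = (\<Sum>p\<in>S. (x p)^2)"
    by (simp add: power2_eq_square if_distrib[of "\<lambda>t. _ * t"] sum.delta S_def cong: if_cong)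
  finally show ?thesis
    using double_sum_same_fibre_nonneg[of S x "\<lambda>_. ()"]
      double_sum_same_fibre_nonneg[of S x "\<lambda>p. p div d"]
      double_sum_same_fibre_nonneg[of S x "\<lambda>p. p mod d"]
    by (simp add: S_def mult_left_mono)
qed

lemma sum_lessThan_restrict:
  fixes K n :: nat
  assumes "K \<le> n"
  shows "(\<Sum>p<n. if p < K then f p else 0) = (\<Sum>p<K. f p)"
proof -
  have "{p \<in> {..<n}. p < K} = {..<K}" using assms by auto
  then show ?thesis using sum.inter_filter[of "{..<n}" f "\<lambda>p. p < K"] by simp
qed

lemma lead_sub_inverse:
  fixes A :: "real mat"
  assumes "K \<le> n"
    and pos_def: "\<And>x. (\<exists>p<n. x p \<noteq> 0) \<Longrightarrow> (\<Sum>p<n. \<Sum>q<n. x p * x q * A $$ (p, q)) > 0"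
  shows "minv (lead_sub A K) \<in> carrier_mat K K" "minv (lead_sub A K) * lead_sub A K = 1\<^sub>m K"
proof -
  let ?L = "lead_sub A K"
  have L: "?L \<in> carrier_mat K K" unfolding lead_sub_def by simp
  have "det ?L \<noteq> 0"
  proof
    assume "det ?L = 0"
    then obtain v where v: "v \<in> carrier_vec K" "v \<noteq> 0\<^sub>v K" "?L *\<^sub>v v = 0\<^sub>v K"
      using det_0_iff_vec_prod_zero_field[OF L] by blast
    define x where "x p = (if p < K then v $ p else 0)" for p
    have "\<exists>p<K. v $ p \<noteq> 0" using v(1,2) by (auto intro: eq_vecI)
    then have "\<exists>p<n. x p \<noteq> 0" using assms(1) by (auto simp: x_def)
    then have "0 < (\<Sum>p<n. \<Sum>q<n. x p * x q * A $$ (p, q))" by (rule pos_def)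
    also have "\<dots> = (\<Sum>p<n. if p < K then (\<Sum>q<n. if q < K then v $ p * (A $$ (p, q) * v $ q) else 0) else 0)"
      by (auto simp: x_def intro!: sum.cong)
    also have "\<dots> = (\<Sum>p<K. v $ p * (\<Sum>q<K. A $$ (p, q) * v $ q))"
      using assms(1) by (simp add: sum_lessThan_restrict sum_distrib_left)
    also have "\<dots> = (\<Sum>p<K. v $ p * (?L *\<^sub>v v) $ p)"
      using v(1) by (intro sum.cong refl) (simp add: lead_sub_def scalar_prod_def atLeast0LessThan)
    also have "\<dots> = 0" using v(3) by simp
    finally show False by simp
  qed
  then have "?L \<in> Units (ring_mat TYPE(real) K ())" by (rule det_non_zero_imp_unit[OF L])
  then obtain B where B: "B \<in> carrier_mat K K" "B * ?L = 1\<^sub>m K" "?L * B = 1\<^sub>m K"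
    unfolding Units_def ring_mat_def by auto
  have "minv ?L = B" by (rule minv_eqI[OF L B(1) B(3) B(2)])
  then show "minv ?L \<in> carrier_mat K K" "minv ?L * ?L = 1\<^sub>m K" using B by auto
qed

lemma inv_schur_Suc_eq:
  fixes A :: "real mat" and w :: "nat \<Rightarrow> real"
  assumes B: "minv (lead_sub A K) \<in> carrier_mat K K" "minv (lead_sub A K) * lead_sub A K = 1\<^sub>m K"
    and w: "\<And>q. q < K \<Longrightarrow> (\<Sum>c<K. A $$ (q, c) * w c) = A $$ (q, K)"
  shows "inv_schur A (Suc K) = 1 / (A $$ (K, K) - (\<Sum>a<K. A $$ (K, a) * w a))"
proof (cases "K = 0")
  case False
  let ?B = "minv (lead_sub A K)"
  have BL: "(\<Sum>b<K. ?B $$ (a, b) * A $$ (b, c)) = (if a = c then 1 else 0)" if "a < K" "c < K" for a c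
  proof -
    have "(\<Sum>b<K. ?B $$ (a, b) * A $$ (b, c)) = (\<Sum>b<K. ?B $$ (a, b) * lead_sub A K $$ (b, c))"
      using that by (intro sum.cong refl) (simp add: lead_sub_def)
    also have "\<dots> = (?B * lead_sub A K) $$ (a, c)"
      using that B(1) by (subst index_mult_mat_sum) (auto simp: lead_sub_def)
    also have "\<dots> = (if a = c then 1 else 0)" using B(2) that by simp
    finally show ?thesis .
  qed
  have Bw: "(\<Sum>b<K. ?B $$ (a, b) * A $$ (b, K)) = w a" if a: "a < K" for a
  proof -
    have "(\<Sum>b<K. ?B $$ (a, b) * A $$ (b, K)) = (\<Sum>b<K. ?B $$ (a, b) * (\<Sum>c<K. A $$ (b, c) * w c))"
      by (intro sum.cong refl) (simp add: w)
    also have "\<dots> = (\<Sum>b<K. \<Sum>c<K. ?B $$ (a, b) * A $$ (b, c) * w c)"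
      by (simp add: sum_distrib_left mult.assoc)
    also have "\<dots> = (\<Sum>c<K. (\<Sum>b<K. ?B $$ (a, b) * A $$ (b, c)) * w c)"
      by (subst sum.swap) (simp add: sum_distrib_right)
    also have "\<dots> = w a" using a by (simp add: BL if_distrib[of "\<lambda>t. t * _"] cong: if_cong)
    finally show ?thesis .
  qed
  have "(\<Sum>a<K. \<Sum>b<K. A $$ (K, a) * ?B $$ (a, b) * A $$ (b, K)) = (\<Sum>a<K. A $$ (K, a) * w a)"
    by (simp add: Bw mult.assoc flip: sum_distrib_left)
  then show ?thesis using False by (simp add: inv_schur_def Let_def)
qed (simp add: inv_schur_def)

lemma Psi_positive_definite:
  assumes "d > 0" and "\<exists>p<d^2. x p \<noteq> 0"
  shows "(\<Sum>p<d^2. \<Sum>q<d^2. x p * x q * Psi d $$ (p, q)) > 0"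
proof -
  obtain p where "p < d^2" "x p \<noteq> 0" using assms(2) by blast
  then have "(\<Sum>p<d^2. (x p)^2) > 0" by (intro sum_pos2[of _ p]) auto
  then have "(real d / (real d + 1))^2 * (\<Sum>p<d^2. (x p)^2) > 0" using assms(1) by simp
  then show ?thesis using Psi_quadratic_form_ge[where x = x and d = d] by linarith
qed

definition staircase_vec :: "nat \<Rightarrow> nat \<Rightarrow> real" where
  "staircase_vec I x = (if x = I then 1 else if x < I then - 1 / (real I + 1) else 0)"

lemma sum_staircase_vec:
  assumes "I < d"
  shows "(\<Sum>x<d. staircase_vec I x) = 1 / (real I + 1)"
proof -
  have "{x \<in> {..<d}. x < I} = {..<I}" using assms by auto
  then have "(\<Sum>x<d. if x < I then - 1 / (real I + 1) else 0) = - real I / (real I + 1)"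
    using sum.inter_filter[of "{..<d}" "\<lambda>_. - 1 / (real I + 1)" "\<lambda>x. x < I"] by simp
  moreover have "(\<Sum>x<d. staircase_vec I x)
      = (\<Sum>x<d. (if x = I then 1 else 0) + (if x < I then - 1 / (real I + 1) else 0))"
    unfolding staircase_vec_def by (intro sum.cong refl) auto
  ultimately show ?thesis using assms by (simp add: sum.distrib field_simps)
qed

lemma psi_factor_staircase_vec:
  assumes "I < d" "z < d"
  shows "(\<Sum>x<d. psi_factor d $$ (z, x) * staircase_vec I x)
       = real d / (real d + 1) * (staircase_vec I z + 1 / (real I + 1))"
proof -
  have "(\<Sum>x<d. psi_factor d $$ (z, x) * staircase_vec I x)
      = (\<Sum>x<d. real d / (real d + 1) * (staircase_vec I x + (if x = z then staircase_vec I z else 0)))"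
    using assms by (intro sum.cong refl) (auto simp: psi_factor_def)
  also have "\<dots> = real d / (real d + 1)
      * ((\<Sum>x<d. staircase_vec I x) + (\<Sum>x<d. if x = z then staircase_vec I z else 0))"
    by (simp only: sum_distrib_left[symmetric] sum.distrib)
  also have "\<dots> = real d / (real d + 1) * (staircase_vec I z + 1 / (real I + 1))"
    using assms by (simp add: sum_staircase_vec)
  finally show ?thesis .
qed

definition staircase_kron :: "nat \<Rightarrow> nat \<Rightarrow> nat \<Rightarrow> real" where
  "staircase_kron d K b = staircase_vec (K div d) (b div d) * staircase_vec (K mod d) (b mod d)"

lemma Psi_mult_staircase_kron:
  assumes "K < d^2" "q < d^2"
  shows "(\<Sum>b<d^2. Psi d $$ (q, b) * staircase_kron d K b)
    = (real d / (real d + 1))^2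
      * (staircase_vec (K div d) (q div d) + 1 / (real (K div d) + 1))
      * (staircase_vec (K mod d) (q mod d) + 1 / (real (K mod d) + 1))"
proof -
  let ?H = "psi_factor d"
  have "(\<Sum>b<d^2. Psi d $$ (q, b) * staircase_kron d K b)
      = (\<Sum>b<d*d. (?H $$ (q div d, b div d) * staircase_vec (K div d) (b div d))
                 * (?H $$ (q mod d, b mod d) * staircase_vec (K mod d) (b mod d)))"
    using assms div_mod_less_mult[of _ d d]
    by (auto simp: power2_eq_square Psi_def staircase_kron_def intro!: sum.cong)
  also have "\<dots> = (\<Sum>x<d. ?H $$ (q div d, x) * staircase_vec (K div d) x)
                 * (\<Sum>y<d. ?H $$ (q mod d, y) * staircase_vec (K mod d) y)"
    by (rule sum_lessThan_mult_div_mod)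
  finally show ?thesis
    using assms div_mod_less_mult[of K d d] div_mod_less_mult[of q d d]
    by (simp add: psi_factor_staircase_vec power2_eq_square)
qed

lemma staircase_kron_eq_0:
  assumes "d > 0" "K < b"
  shows "staircase_kron d K b = 0"
proof -
  have "K div d \<le> b div d" using assms by (simp add: div_le_mono)
  moreover have "K div d = b div d \<Longrightarrow> K mod d < b mod d"
    using assms by (metis add_less_cancel_left div_mult_mod_eq)
  ultimately show ?thesis unfolding staircase_kron_def staircase_vec_def by auto
qed

lemma staircase_vec_plus_below:
  "z < I \<Longrightarrow> staircase_vec I z + 1 / (real I + 1) = 0"
  by (simp add: staircase_vec_def)

definition schur_factor :: "nat \<Rightarrow> nat \<Rightarrow> real" where
  "schur_factor d I = (real d + 1) * (real I + 1) / (real d * (real I + 2))"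

lemma inv_schur_Psi:
  assumes d: "d > 0" and K: "K < d^2"
  shows "inv_schur (Psi d) (Suc K) = schur_factor d (K div d) * schur_factor d (K mod d)"
proof -
  let ?u = "staircase_kron d K"
  define w where "w b = - ?u b" for b
  have split: "(\<Sum>b<d^2. Psi d $$ (q, b) * ?u b) = (\<Sum>b<K. Psi d $$ (q, b) * ?u b) + Psi d $$ (q, K)"
    for q
  proof -
    have "(\<Sum>b<d^2. Psi d $$ (q, b) * ?u b) = (\<Sum>b<Suc K. Psi d $$ (q, b) * ?u b)"
      using K staircase_kron_eq_0[OF d] by (intro sum.mono_neutral_right) auto
    then show ?thesis by (simp add: staircase_kron_def staircase_vec_def)
  qed
  have solves: "(\<Sum>c<K. Psi d $$ (q, c) * w c) = Psi d $$ (q, K)" if q: "q < K" for q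
  proof -
    have "q div d < K div d \<or> (q div d = K div d \<and> q mod d < K mod d)"
      using q by (metis add_less_cancel_left div_le_mono div_mult_mod_eq le_neq_implies_less less_imp_le)
    then have "(\<Sum>b<d^2. Psi d $$ (q, b) * ?u b) = 0"
      using q K by (auto simp: Psi_mult_staircase_kron staircase_vec_plus_below)
    then show ?thesis using split[of q] by (simp add: w_def sum_negf)
  qed
  have "minv (lead_sub (Psi d) K) \<in> carrier_mat K K" "minv (lead_sub (Psi d) K) * lead_sub (Psi d) K = 1\<^sub>m K"
    using K Psi_positive_definite[OF d] by (auto intro!: lead_sub_inverse[of K "d^2"])
  then have "inv_schur (Psi d) (Suc K) = 1 / (Psi d $$ (K, K) - (\<Sum>a<K. Psi d $$ (K, a) * w a))"
    using solves by (rule inv_schur_Suc_eq)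
  also have "Psi d $$ (K, K) - (\<Sum>a<K. Psi d $$ (K, a) * w a) = (\<Sum>b<d^2. Psi d $$ (K, b) * ?u b)"
    using split[of K] by (simp add: w_def sum_negf)
  also have "\<dots> = (real d / (real d + 1))^2 * (1 + 1 / (real (K div d) + 1)) * (1 + 1 / (real (K mod d) + 1))"
    using K by (simp add: Psi_mult_staircase_kron staircase_vec_def)
  also have "1 / \<dots> = schur_factor d (K div d) * schur_factor d (K mod d)"
    using d by (simp add: schur_factor_def field_simps power2_eq_square)
  finally show ?thesis .
qed

lemma schur_factor_bounds:
  assumes "d > 0" "I < d"
  shows "(real I + 1) / (real I + 2) \<le> schur_factor d I" "schur_factor d I \<le> 1" "1/2 \<le> schur_factor d I"
proof -
  have dp: "real d > 0" using assms by simp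
  have factor: "schur_factor d I = ((real d + 1) / real d) * ((real I + 1) / (real I + 2))"
    unfolding schur_factor_def by simp
  have "1 \<le> (real d + 1) / real d" using dp by simp
  from mult_right_mono[OF this, of "(real I + 1) / (real I + 2)"]
  show lower: "(real I + 1) / (real I + 2) \<le> schur_factor d I"
    unfolding factor by simp
  have "(real d + 1) * (real I + 1) \<le> real d * (real I + 2)"
    using assms by (simp add: algebra_simps)
  then show "schur_factor d I \<le> 1" unfolding schur_factor_def using dp by simp
  have "1/2 \<le> (real I + 1) / (real I + 2)" by (simp add: field_simps)
  with lower show "1/2 \<le> schur_factor d I" by linarith
qed

lemma one_plus_third_cubed_le_exp:
  fixes y :: real
  assumes "y \<ge> 0"
  shows "(1 + y/3)^3 \<le> exp y"
proof -
  have "(1 + y/3)^3 \<le> exp (y/3) ^ 3" using assms by (intro power_mono) auto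
  also have "exp (y/3) ^ 3 = exp y" by (simp flip: exp_of_nat_mult)
  finally show ?thesis .
qed

text \<open>Either \<open>D powr (2/s) \<le> e\<close>, or \<open>ln D > s/2\<close> and then \<open>D powr (2/s - 1) \<le> exp (1 - s/2)\<close>,
  which is \<open>O(s\<^sup>-\<^sup>2)\<close>.\<close>

lemma powr_two_div_minus_one_le:
  fixes D s :: real
  assumes D: "D \<ge> 1" and s: "s \<ge> 2"
  shows "D powr (2/s - 1) \<le> exp 1 / D + 12 / (s * (s - 1))"
proof (cases "D powr (2/s) \<le> exp 1")
  case True
  have "D powr (2/s - 1) = D powr (2/s) / D" using D by (simp add: powr_diff)
  also have "\<dots> \<le> exp 1 / D" using True D by (simp add: divide_right_mono)
  moreover have "0 \<le> 12 / (s * (s - 1))" using s by simp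
  ultimately show ?thesis by linarith
next
  case False
  have Dp: "D > 0" using D by simp
  have "exp 1 < exp ((2/s) * ln D)" using False Dp by (simp add: powr_def)
  then have lnD: "ln D > s/2" using s by (simp add: field_simps)
  define y where "y = s/2 - 1"
  have y: "y \<ge> 0" "s = 2*y + 2" using s unfolding y_def by simp_all
  have "(2/s - 1) * ln D \<le> (2/s - 1) * (s/2)"
    using lnD s by (intro mult_left_mono_neg) (auto simp: field_simps)
  also have "\<dots> = - y" using s unfolding y_def by (simp add: field_simps)
  finally have "D powr (2/s - 1) \<le> exp (- y)" using Dp by (simp add: powr_def)
  also have "\<dots> \<le> 12 / (s * (s - 1))"
  proof -
    have "s * (s - 1) = 4*y^2 + 6*y + 2" unfolding y(2) by (simp add: power2_eq_square algebra_simps)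
    also have "\<dots> \<le> 12 * (1 + y/3)^3"
      using y(1) by (simp add: power2_eq_square power3_eq_cube field_simps)
    also have "\<dots> \<le> 12 * exp y" using one_plus_third_cubed_le_exp[OF y(1)] by simp
    finally have "s * (s - 1) \<le> 12 * exp y" .
    moreover have "s * (s - 1) > 0" using s by simp
    ultimately show ?thesis by (simp add: exp_minus field_simps)
  qed
  finally show ?thesis using D by (smt (verit) divide_nonneg_nonneg exp_gt_zero)
qed

lemma sum_inverse_consecutive_products:
  "(\<Sum>I<d. 1 / ((real I + 1) * (real I + 2))) = 1 - 1 / (real d + 1)"
proof (induction d)
  case (Suc d)
  have "1 / ((real d + 1) * (real d + 2)) = 1 / (real d + 1) - 1 / (real d + 2)"
    by (simp add: field_simps)
  with Suc show ?case by simp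
qed simp

lemma sum_powr_one_minus_twice_le:
  fixes b :: "nat \<Rightarrow> real"
  assumes d: "d > 0" and b: "\<And>I. I < d \<Longrightarrow> b I \<ge> (real I + 1) / (real I + 2)"
  shows "(\<Sum>I<d. real d powr (1 - 2 * b I)) \<le> exp 1 + 12"
proof -
  have "(\<Sum>I<d. real d powr (1 - 2 * b I))
      \<le> (\<Sum>I<d. exp 1 / real d + 12 * (1 / ((real I + 1) * (real I + 2))))"
  proof (intro sum_mono)
    fix I assume "I \<in> {..<d}"
    then have "1 - 2 * b I \<le> 2 / (real I + 2) - 1"
      using b[of I] by (simp add: field_simps)
    then have "real d powr (1 - 2 * b I) \<le> real d powr (2 / (real I + 2) - 1)"
      using d by (intro powr_mono) auto
    also have "\<dots> \<le> exp 1 / real d + 12 / ((real I + 2) * ((real I + 2) - 1))"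
      by (rule powr_two_div_minus_one_le) (use d in auto)
    finally show "real d powr (1 - 2 * b I) \<le> exp 1 / real d + 12 * (1 / ((real I + 1) * (real I + 2)))"
      by (simp add: algebra_simps)
  qed
  also have "\<dots> = exp 1 + 12 * (1 - 1 / (real d + 1))"
    by (simp only: sum.distrib sum_distrib_left[symmetric] sum_inverse_consecutive_products) (use d in simp)
  also have "\<dots> \<le> exp 1 + 12" by simp
  finally show ?thesis .
qed

lemma powr_neg_product_le:
  fixes \<alpha> D b c :: real
  assumes a: "\<alpha> \<ge> 1" and D: "D \<ge> 1" and b: "1/2 \<le> b" "b \<le> 1" and c: "1/2 \<le> c" "c \<le> 1"
  shows "(\<alpha> * D^2) powr (- (b * c)) \<le> \<alpha> powr (-1/4) * (D powr (1 - 2*b) * D powr (1 - 2*c))"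
proof -
  have "(\<alpha> * D^2) powr (- (b * c)) = \<alpha> powr (- (b * c)) * (D powr (- (b * c)) * D powr (- (b * c)))"
    using a D by (simp add: powr_mult power2_eq_square)
  also have "\<dots> = \<alpha> powr (- (b * c)) * D powr (-2 * (b * c))"
    by (simp add: powr_add[symmetric])
  also have "\<dots> \<le> \<alpha> powr (-1/4) * D powr ((1 - 2*b) + (1 - 2*c))"
  proof (intro mult_mono powr_mono)
    show "- (b * c) \<le> -1/4" using b c mult_mono[of "1/2" b "1/2" c] by simp
    have "0 \<le> (1 - b) * (1 - c)" using b c by simp
    then show "-2 * (b * c) \<le> (1 - 2*b) + (1 - 2*c)" by (simp add: algebra_simps)
  qed (use a D in auto)
  also have "\<dots> = \<alpha> powr (-1/4) * (D powr (1 - 2*b) * D powr (1 - 2*c))"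
    by (simp only: powr_add)
  finally show ?thesis .
qed

lemma g_bound_constant_ge:
  "(exp 1 + 12)^2 \<le> 1 + 2 * exp (4 / exp 1) + 2 * exp (8 / exp 1) + exp (32 / exp (1::real))"
proof -
  have e: "exp 1 \<le> (3::real)" by (rule exp_le)
  have "(1024::real) = 2^10" by simp
  also have "\<dots> \<le> exp 1 ^ 10" using exp_ge_add_one_self[of 1] by (intro power_mono) auto
  also have "\<dots> = exp 10" by (simp flip: exp_of_nat_mult)
  also have "\<dots> \<le> exp (32 / exp 1)" using e by (simp add: field_simps)
  finally have "1024 \<le> exp (32 / exp (1::real))" .
  moreover have "(exp 1 + 12)^2 \<le> (225::real)"
  proof -
    have "(exp 1 + 12)^2 \<le> (15::real)^2" using e by (intro power_mono) auto
    then show ?thesis by simp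
  qed
  moreover have "0 \<le> exp (4 / exp (1::real))" "0 \<le> exp (8 / exp (1::real))" by auto
  ultimately show ?thesis by linarith
qed

lemma sum_inv_schur_Psi_le_g_bound:
  fixes \<alpha> :: real
  assumes a: "\<alpha> \<ge> 1" and d: "d > 0"
  shows "(\<Sum>k=1..d^2. (\<alpha> * real (d^2)) powr (- inv_schur (Psi d) k)) \<le> g_bound \<alpha>"
proof -
  define t where "t I = real d powr (1 - 2 * schur_factor d I)" for I
  have t_sum: "(\<Sum>I<d. t I) \<le> exp 1 + 12"
    unfolding t_def by (rule sum_powr_one_minus_twice_le[OF d]) (use schur_factor_bounds[OF d] in auto)
  have "(\<Sum>k=1..d^2. (\<alpha> * real (d^2)) powr (- inv_schur (Psi d) k))
      = (\<Sum>K<d*d. (\<alpha> * (real d)^2) powr (- inv_schur (Psi d) (Suc K)))"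
    by (simp add: sum.atLeast1_atMost_eq power2_eq_square)
  also have "\<dots> = (\<Sum>K<d*d. (\<alpha> * (real d)^2) powr (- (schur_factor d (K div d) * schur_factor d (K mod d))))"
    using d by (intro sum.cong refl) (simp add: inv_schur_Psi power2_eq_square)
  also have "\<dots> = (\<Sum>I<d. \<Sum>J<d. (\<alpha> * (real d)^2) powr (- (schur_factor d I * schur_factor d J)))"
    by (subst sum_lessThan_mult_row_major) (auto intro!: sum.cong)
  also have "\<dots> \<le> (\<Sum>I<d. \<Sum>J<d. \<alpha> powr (-1/4) * (t I * t J))"
    unfolding t_def using schur_factor_bounds[OF d] d a
    by (intro sum_mono powr_neg_product_le) auto
  also have "\<dots> = \<alpha> powr (-1/4) * ((\<Sum>I<d. t I) * (\<Sum>J<d. t J))"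
    unfolding sum_product by (simp only: sum_distrib_left)
  also have "\<dots> \<le> \<alpha> powr (-1/4) * (exp 1 + 12)^2"
    using t_sum by (intro mult_left_mono) (simp_all add: power2_eq_square mult_mono sum_nonneg t_def)
  also have "\<dots> \<le> \<alpha> powr (-1/4) * (1 + 2 * exp (4 / exp 1) + 2 * exp (8 / exp 1) + exp (32 / exp 1))"
    by (intro mult_left_mono g_bound_constant_ge) simp
  also have "\<dots> = g_bound \<alpha>"
  proof -
    have "\<alpha> powr (-1/4) = inverse (\<alpha> powr (1/4))" using powr_minus[of \<alpha> "1/4"] by simp
    then show ?thesis unfolding g_bound_def by (simp only: divide_inverse mult.commute)
  qed
  finally show ?thesis .
qed

lemma g_bound_antimono:
  assumes "1 \<le> x" "x \<le> y"
  shows "g_bound y \<le> g_bound x"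
proof -
  have "x powr (1/4) \<le> y powr (1/4)" using assms by (intro powr_mono2) auto
  moreover have "0 \<le> 1 + 2 * exp (4 / exp 1) + 2 * exp (8 / exp 1) + exp (32 / exp (1::real))"
    by (intro add_nonneg_nonneg) auto
  moreover have "0 < y powr (1/4) * x powr (1/4)" using assms by simp
  ultimately show ?thesis unfolding g_bound_def by (rule divide_left_mono)
qed

lemma g_bound_tendsto_0: "(g_bound \<longlongrightarrow> 0) at_top"
proof -
  define C where "C = 1 + 2 * exp (4 / exp 1) + 2 * exp (8 / exp 1) + exp (32 / exp (1::real))"
  have g_bound: "(\<lambda>x. C * x powr (-1/4)) = g_bound"
  proof
    fix x :: real
    have "x powr (-1/4) = inverse (x powr (1/4))" using powr_minus[of x "1/4"] by simp
    then show "C * x powr (-1/4) = g_bound x"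
      unfolding g_bound_def C_def by (simp only: divide_inverse)
  qed
  have "((\<lambda>x::real. x powr (-1/4)) \<longlongrightarrow> 0) at_top"
    by (rule tendsto_neg_powr) (auto simp: filterlim_ident)
  then have "((\<lambda>x. C * x powr (-1/4)) \<longlongrightarrow> 0) at_top"
    by (rule tendsto_mult_right_zero)
  then show ?thesis unfolding g_bound .
qed

theorem mainTheorem8:
  shows "(\<forall>n\<ge>2. invertible_mat (Gamma n))
       \<and> (\<forall>n\<ge>2. max_norm (minv (Gamma n)) \<le> 4)
       \<and> (\<forall>\<alpha>::real. \<forall>n::nat. \<alpha> \<ge> 1 \<longrightarrow> n \<ge> 2 \<longrightarrow>
            (let m = (n - 1)^2 in
              (\<Sum>k=1..m. (\<alpha> * real m) powr (- inv_schur (minv (Gamma n)) k)))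
            \<le> g_bound \<alpha>)
       \<and> (\<forall>x y. 1 \<le> x \<longrightarrow> x \<le> y \<longrightarrow> g_bound y \<le> g_bound x)
       \<and> (g_bound \<longlongrightarrow> 0) at_top"
proof (intro conjI allI impI)
  fix n :: nat assume n: "n \<ge> 2"
  then show "invertible_mat (Gamma n)" by (rule Gamma_inverse)
  show "max_norm (minv (Gamma n)) \<le> 4"
    using n by (simp add: Gamma_inverse max_norm_Psi_le)
  fix \<alpha> :: real assume "\<alpha> \<ge> 1"
  then show "(let m = (n - 1)^2 in
      (\<Sum>k=1..m. (\<alpha> * real m) powr (- inv_schur (minv (Gamma n)) k))) \<le> g_bound \<alpha>"
    unfolding Let_def Gamma_inverse(2)[OF n]
    by (rule sum_inv_schur_Psi_le_g_bound) (use n in simp)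
qed (simp_all add: g_bound_antimono g_bound_tendsto_0)

end
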